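(* Let $G=(V,E)$ be a finite connected graph with $|V|=n$ and let $s:V\to\mathbb{R}$ satisfy $\sum_{x\in V}s(x)=n$. Then $s$ stabilizes to the all $1$ configuration, and the odometer of $s$ is the unique function $u:V\to\mathbb{R}$ satisfying $s+\Delta u=1$ and $\min u=0$.
   Context: $\Delta u(x)=\sum_{y\sim x}(u(y)-u(x))$. $\mathcal{F}_s=\{f:V\to\mathbb{R}: f\ge0,\ s+\Delta f\le1\}$; $s$ stabilizes if $\mathcal{F}_s\ne\emptyset$; the odometer is $u(x)=\inf\{f(x):f\in\mathcal{F}_s\}$; "stabilizes to the all $1$ configuration" means $s+\Delta u\equiv1$ for the odometer $u$. *)

theory Defs
  imports Main "HOL-Library.Extended_Real" Complex_Main
begin

definition finite_graph :: "'a set \<Rightarrow> ('a \<Rightarrow> 'a \<Rightarrow> bool) \<Rightarrow> bool" where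
  "finite_graph V E \<longleftrightarrow> finite V \<and> (\<forall>x y. E x y \<longrightarrow> x \<in> V \<and> y \<in> V)
     \<and> (\<forall>x y. E x y \<longrightarrow> E y x) \<and> (\<forall>x. \<not> E x x)"

definition connected_graph :: "'a set \<Rightarrow> ('a \<Rightarrow> 'a \<Rightarrow> bool) \<Rightarrow> bool" where
  "connected_graph V E \<longleftrightarrow> V \<noteq> {} \<and> (\<forall>x\<in>V. \<forall>y\<in>V. E\<^sup>*\<^sup>* x y)"

definition laplacian :: "'a set \<Rightarrow> ('a \<Rightarrow> 'a \<Rightarrow> bool) \<Rightarrow> ('a \<Rightarrow> real) \<Rightarrow> 'a \<Rightarrow> real" where
  "laplacian V E u x = (\<Sum>y\<in>{y\<in>V. E x y}. u y - u x)"

definition superharm_set :: "'a set \<Rightarrow> ('a \<Rightarrow> 'a \<Rightarrow> bool) \<Rightarrow> ('a \<Rightarrow> real) \<Rightarrow> ('a \<Rightarrow> real) set" where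
  "superharm_set V E s = {f. (\<forall>x\<in>V. f x \<ge> 0) \<and> (\<forall>x\<in>V. s x + laplacian V E f x \<le> 1)}"

definition stabilizes :: "'a set \<Rightarrow> ('a \<Rightarrow> 'a \<Rightarrow> bool) \<Rightarrow> ('a \<Rightarrow> real) \<Rightarrow> bool" where
  "stabilizes V E s \<longleftrightarrow> superharm_set V E s \<noteq> {}"

definition odometer :: "'a set \<Rightarrow> ('a \<Rightarrow> 'a \<Rightarrow> bool) \<Rightarrow> ('a \<Rightarrow> real) \<Rightarrow> 'a \<Rightarrow> real" where
  "odometer V E s x = Inf {f x | f. f \<in> superharm_set V E s}"

definition stabilizes_to_one :: "'a set \<Rightarrow> ('a \<Rightarrow> 'a \<Rightarrow> bool) \<Rightarrow> ('a \<Rightarrow> real) \<Rightarrow> bool" where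
  "stabilizes_to_one V E s \<longleftrightarrow> stabilizes V E s \<and>
     (\<forall>x\<in>V. s x + laplacian V E (odometer V E s) x = 1)"

end

theory Submission
  imports Defs "HOL-Library.Function_Algebras" "HOL-Library.Indicator_Function"
begin

text \<open>
  Since the Laplacian of any function sums to zero over V and s sums to |V|, every f in the
  feasible set \<open>\<F>\<^sub>s\<close> satisfies \<open>s + \<Delta>f \<le> 1\<close> with both sides having the same
  total, hence \<open>s + \<Delta>f = 1\<close>. The set is nonempty because \<open>\<Delta>\<close> maps onto the functions of
  sum zero: by the maximum principle its kernel consists of the constants, so a dimension count
  applies. The odometer lies in \<open>\<F>\<^sub>s\<close> (an infimum of such functions is again one, as \<open>\<Delta>u(x)\<close>
  is monotone in the values of u off x), and its minimum is 0 since lowering it by its minimum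
  keeps it in \<open>\<F>\<^sub>s\<close>. Two solutions of \<open>s + \<Delta>u = 1\<close> differ by a harmonic, hence constant,
  function, which the normalisation \<open>min u = 0\<close> forces to vanish.
\<close>

lemma laplacian_diff_const: "laplacian V E (\<lambda>y. f y - c) x = laplacian V E f x"
  unfolding laplacian_def by simp

lemma laplacian_diff: "laplacian V E (\<lambda>y. f y - g y) x = laplacian V E f x - laplacian V E g x"
  unfolding laplacian_def sum_subtractf[symmetric] by (rule sum.cong) auto

lemma laplacian_add: "laplacian V E (\<lambda>y. f y + g y) x = laplacian V E f x + laplacian V E g x"
  unfolding laplacian_def sum.distrib[symmetric] by (rule sum.cong) auto

lemma laplacian_scale: "laplacian V E (\<lambda>y. c * f y) x = c * laplacian V E f x"
  unfolding laplacian_def sum_distrib_left by (rule sum.cong) (auto simp: algebra_simps)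

lemma laplacian_lincomb:
  "laplacian V E (\<lambda>y. \<Sum>a\<in>A. c a * g a y) x = (\<Sum>a\<in>A. c a * laplacian V E (g a) x)"
  unfolding laplacian_def sum_distrib_left right_diff_distrib sum_subtractf[symmetric]
  by (rule sum.swap)

lemma sum_laplacian_eq_0:
  assumes "finite_graph V E"
  shows "(\<Sum>x\<in>V. laplacian V E f x) = 0"
proof -
  have fin: "finite V" and sym: "\<And>x y. E x y = E y x"
    using assms unfolding finite_graph_def by blast+
  let ?flow = "\<lambda>x y. if E x y then f y - f x else 0"
  have "(\<Sum>x\<in>V. laplacian V E f x) = (\<Sum>x\<in>V. \<Sum>y\<in>V. ?flow x y)"
    unfolding laplacian_def using fin by (simp add: sum.inter_filter)
  also have "\<dots> = (\<Sum>y\<in>V. \<Sum>x\<in>V. ?flow x y)" by (rule sum.swap)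
  also have "\<dots> = (\<Sum>y\<in>V. \<Sum>x\<in>V. - ?flow y x)" by (intro sum.cong refl) (auto simp: sym)
  also have "\<dots> = - (\<Sum>y\<in>V. \<Sum>x\<in>V. ?flow y x)" by (simp add: sum_negf)
  finally show ?thesis
    using \<open>(\<Sum>x\<in>V. laplacian V E f x) = _\<close> by linarith
qed

lemma laplacian_le_of_le:
  assumes "finite V" and "\<forall>y\<in>V. u y \<le> f y"
  shows "laplacian V E u x \<le> laplacian V E f x + real (card {y\<in>V. E x y}) * (f x - u x)"
proof -
  let ?N = "{y\<in>V. E x y}"
  have "laplacian V E u x \<le> (\<Sum>y\<in>?N. (f y - f x) + (f x - u x))"
    unfolding laplacian_def using assms(2) by (intro sum_mono) auto
  also have "\<dots> = laplacian V E f x + real (card ?N) * (f x - u x)"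
    unfolding sum.distrib laplacian_def by simp
  finally show ?thesis .
qed

lemma harmonic_neighbour_of_max:
  assumes "finite V" and "laplacian V E f x = 0" and "\<forall>z\<in>V. f z \<le> f x"
    and "y \<in> V" and "E x y"
  shows "f y = f x"
proof -
  let ?N = "{z\<in>V. E x z}"
  have "(\<Sum>z\<in>?N. f x - f z) = 0"
    using assms(2) sum_negf[of "\<lambda>z. f z - f x" ?N] by (simp add: laplacian_def)
  moreover have "\<forall>z\<in>?N. 0 \<le> f x - f z" using assms(3) by auto
  ultimately have "\<forall>z\<in>?N. f x - f z = 0"
    using sum_nonneg_eq_0_iff[of ?N "\<lambda>z. f x - f z"] assms(1) by simp
  then show ?thesis using assms(4,5) by simp
qed

lemma harmonic_imp_constant:
  assumes g: "finite_graph V E" and c: "connected_graph V E"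
    and harm: "\<forall>z\<in>V. laplacian V E f z = 0" and "x \<in> V" "y \<in> V"
  shows "f x = f y"
proof -
  have fin: "finite V" and ne: "V \<noteq> {}" and edge: "\<And>z w. E z w \<Longrightarrow> z \<in> V \<and> w \<in> V"
    using g c by (auto simp: finite_graph_def connected_graph_def)
  have "Max (f ` V) \<in> f ` V" using fin ne by (intro Max_in) auto
  then obtain x0 where x0: "x0 \<in> V" "f x0 = Max (f ` V)" by (metis imageE)
  then have max: "\<forall>z\<in>V. f z \<le> f x0" using fin by simp
  have const: "f z = f x0" if "E\<^sup>*\<^sup>* x0 z" for z
    using that
  proof (induction rule: rtranclp_induct)
    case (step y z)
    have "y \<in> V" "z \<in> V" using edge step.hyps(2) by blast+
    have "\<forall>w\<in>V. f w \<le> f y" using max step.IH by simp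
    then have "f z = f y"
      using fin harm \<open>y \<in> V\<close> \<open>z \<in> V\<close> step.hyps(2)
      by (intro harmonic_neighbour_of_max[of V E f y z]) auto
    with step.IH show ?case by simp
  qed simp
  have "E\<^sup>*\<^sup>* x0 x" "E\<^sup>*\<^sup>* x0 y"
    using c x0(1) \<open>x \<in> V\<close> \<open>y \<in> V\<close> unfolding connected_graph_def by blast+
  then show ?thesis using const by metis
qed

lemma harmonic_indicator_combination_trivial:
  assumes g: "finite_graph V E" and conn: "connected_graph V E"
    and r: "r \<in> V" and A: "A \<subseteq> V - {r}" "finite A"
    and harm: "\<forall>x\<in>V. (\<Sum>a\<in>A. c a * laplacian V E (indicator {a}) x) = 0" and b: "b \<in> A"
  shows "c b = 0"
proof -
  define k where "k y = (\<Sum>a\<in>A. c a * indicator {a} y)" for y :: 'a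
  have k_apply: "k y = (if y \<in> A then c y else 0)" for y
  proof -
    have "k y = (\<Sum>a\<in>A. if a = y then c a else 0)"
      unfolding k_def by (intro sum.cong) (auto simp: indicator_def)
    then show ?thesis using A(2) by simp
  qed
  have "\<forall>x\<in>V. laplacian V E k x = 0"
    using harm unfolding k_def laplacian_lincomb .
  then have "k b = k r" using harmonic_imp_constant[OF g conn] A(1) b r by blast
  then show ?thesis using A(1) b by (auto simp: k_apply)
qed

lemma sum_apply: "(\<Sum>a\<in>A. f a) x = (\<Sum>a\<in>A. f a x)"
  by (induction A rule: infinite_finite_induct) auto

definition scale_fun :: "real \<Rightarrow> ('b \<Rightarrow> real) \<Rightarrow> 'b \<Rightarrow> real" where
  "scale_fun c f = (\<lambda>x. c * f x)"

global_interpretation fun_space: vector_space "scale_fun :: real \<Rightarrow> ('b \<Rightarrow> real) \<Rightarrow> 'b \<Rightarrow> real"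
  by unfold_locales (auto simp: scale_fun_def fun_eq_iff algebra_simps)

lemma (in vector_space) inj_on_if_independent_family:
  assumes indep: "\<And>c. (\<Sum>a\<in>A. c a *s g a) = 0 \<Longrightarrow> \<forall>a\<in>A. c a = 0" and "finite A"
  shows "inj_on g A"
proof
  fix a b assume ab: "a \<in> A" "b \<in> A" "g a = g b"
  show "a = b"
  proof (rule ccontr)
    assume "a \<noteq> b"
    have delta: "(\<Sum>z\<in>A. (if z = x then 1 else 0) *s g z) = g x" if "x \<in> A" for x
    proof -
      have "(\<Sum>z\<in>A. (if z = x then 1 else 0) *s g z) = (\<Sum>z\<in>A. if z = x then g z else 0)"
        by (intro sum.cong) auto
      then show ?thesis using that \<open>finite A\<close> by simp
    qed
    let ?c = "\<lambda>z. (if z = a then 1 else 0) - (if z = b then 1 else 0 :: 'a)"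
    have "(\<Sum>z\<in>A. ?c z *s g z) = g a - g b"
      using ab(1,2) by (simp add: scale_left_diff_distrib sum_subtractf delta)
    then have "(\<Sum>z\<in>A. ?c z *s g z) = 0" using ab(3) by (metis diff_self)
    from indep[OF this] have "?c a = 0" using ab(1) by blast
    then show False using \<open>a \<noteq> b\<close> by simp
  qed
qed

lemma (in vector_space) independent_image_if_independent_family:
  assumes indep: "\<And>c. (\<Sum>a\<in>A. c a *s g a) = 0 \<Longrightarrow> \<forall>a\<in>A. c a = 0" and "finite A"
  shows "independent (g ` A)"
proof (rule independent_if_scalars_zero)
  show "finite (g ` A)" using \<open>finite A\<close> by simp
next
  fix u v assume u: "(\<Sum>v\<in>g ` A. u v *s v) = 0" and "v \<in> g ` A"
  have "inj_on g A" using inj_on_if_independent_family[OF indep \<open>finite A\<close>] .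
  then have "(\<Sum>a\<in>A. u (g a) *s g a) = 0" using u by (simp add: sum.reindex)
  then show "u v = 0" using indep[of "\<lambda>a. u (g a)"] \<open>v \<in> g ` A\<close> by auto
qed

lemma (in vector_space) span_subset_if_independent_card_ge:
  assumes "independent B" and "B \<subseteq> span T" and "finite T" and "card T \<le> card B"
  shows "span T \<subseteq> span B"
proof -
  have "t \<in> span B" if "t \<in> T" for t
  proof (rule ccontr)
    assume t: "t \<notin> span B"
    have "independent (insert t B)" using independent_insertI[OF t assms(1)] .
    moreover have "insert t B \<subseteq> span T" using that assms(2) span_base by blast
    ultimately have "finite (insert t B) \<and> card (insert t B) \<le> card T"
      by (rule independent_span_bound[OF assms(3)])
    moreover have "t \<notin> B" using t span_base by blast
    ultimately have "Suc (card B) \<le> card T" by auto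
    then show False using assms(4) by simp
  qed
  then show ?thesis by (intro span_minimal subspace_span) blast
qed

lemma (in vector_space) span_subset_span_image_if_independent_family:
  assumes indep: "\<And>c. (\<Sum>a\<in>A. c a *s g a) = 0 \<Longrightarrow> \<forall>a\<in>A. c a = 0"
    and "finite A" and "g ` A \<subseteq> span T" and "finite T" and "card T \<le> card A"
  shows "span T \<subseteq> span (g ` A)"
  using assms independent_image_if_independent_family[OF indep]
    card_image[OF inj_on_if_independent_family[OF indep]]
  by (intro span_subset_if_independent_card_ge) auto

lemma zero_sum_fun_in_span:
  assumes "finite V" and "r \<in> V" and "\<forall>x. x \<notin> V \<longrightarrow> k x = 0" and "(\<Sum>x\<in>V. k x) = 0"
  shows "k \<in> fun_space.span ((\<lambda>a. indicator {a} - indicator {r}) ` (V - {r}))"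
proof -
  have k: "k = (\<Sum>a\<in>V - {r}. scale_fun (k a) (indicator {a} - indicator {r}))"
  proof
    fix x
    have "(\<Sum>a\<in>V - {r}. k a) = - k r"
      using assms by (simp add: sum_diff1)
    then have "(\<Sum>a\<in>V - {r}. scale_fun (k a) (indicator {a} - indicator {r})) x
        = (\<Sum>a\<in>V - {r}. k a * indicator {a} x) + k r * indicator {r} x"
      by (simp add: sum_apply scale_fun_def right_diff_distrib sum_subtractf flip: sum_distrib_right)
    also have "\<dots> = k x"
      using assms by (auto simp: indicator_def Int_insert_right)
    finally show "k x = (\<Sum>a\<in>V - {r}. scale_fun (k a) (indicator {a} - indicator {r})) x" by simp
  qed
  show ?thesis
    by (subst k) (intro fun_space.span_sum fun_space.span_scale fun_space.span_base imageI)
qed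

lemma laplacian_solvable:
  assumes g: "finite_graph V E" and conn: "connected_graph V E" and h: "(\<Sum>x\<in>V. h x) = 0"
  shows "\<exists>f. \<forall>x\<in>V. laplacian V E f x = h x"
proof -
  have fin: "finite V" and "V \<noteq> {}"
    using g conn by (auto simp: finite_graph_def connected_graph_def)
  then obtain r where r: "r \<in> V" by blast
  define A where "A = V - {r}"
  define T where "T = (\<lambda>a. indicator {a} - indicator {r} :: 'a \<Rightarrow> real) ` A"
  define L where "L f = (\<lambda>x. if x \<in> V then laplacian V E f x else 0)" for f :: "'a \<Rightarrow> real"
  have finA: "finite A" using fin by (simp add: A_def)
  interpret L: Vector_Spaces.linear scale_fun scale_fun L
    by unfold_locales
      (simp_all add: L_def scale_fun_def fun_eq_iff plus_fun_def laplacian_add laplacian_scale)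
  have zero_sum_in_T: "k \<in> fun_space.span T"
    if "\<forall>x. x \<notin> V \<longrightarrow> k x = 0" and "(\<Sum>x\<in>V. k x) = 0" for k
    using zero_sum_fun_in_span[OF fin r that] by (simp add: T_def A_def)
  have range_L: "L f \<in> fun_space.span T" for f
    using sum_laplacian_eq_0[OF g] by (intro zero_sum_in_T) (auto simp: L_def)
  have indep: "\<forall>a\<in>A. c a = 0"
    if sum0: "(\<Sum>a\<in>A. scale_fun (c a) (L (indicator {a}))) = 0" for c
  proof
    fix b assume "b \<in> A"
    have "(\<Sum>a\<in>A. c a * laplacian V E (indicator {a}) x) = 0" if "x \<in> V" for x
      using fun_cong[OF sum0, of x] that
      by (simp add: sum_apply scale_fun_def L_def)
    then show "c b = 0"
      using harmonic_indicator_combination_trivial[OF g conn r _ finA _ \<open>b \<in> A\<close>]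
      by (simp add: A_def)
  qed
  \<comment> \<open>The \<open>|V| - 1\<close> independent functions \<open>\<Delta>\<delta>\<^sub>a\<close> lie in the span of the \<open>|V| - 1\<close>
      functions \<open>\<delta>\<^sub>a - \<delta>\<^sub>r\<close>, hence span it.\<close>
  have "fun_space.span T \<subseteq> fun_space.span ((\<lambda>a. L (indicator {a})) ` A)"
  proof (rule fun_space.span_subset_span_image_if_independent_family[OF indep finA])
    show "(\<lambda>a. L (indicator {a})) ` A \<subseteq> fun_space.span T" using range_L by blast
    show "finite T" using finA by (simp add: T_def)
    show "card T \<le> card A" unfolding T_def by (rule card_image_le[OF finA])
  qed
  also have "\<dots> = L ` fun_space.span ((\<lambda>a. indicator {a}) ` A)"
    using L.span_image[of "(\<lambda>a. indicator {a}) ` A"] by (simp add: image_image)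
  also have "\<dots> \<subseteq> range L" by blast
  finally obtain f where f: "L f = (\<lambda>x. if x \<in> V then h x else 0)"
    using zero_sum_in_T[of "\<lambda>x. if x \<in> V then h x else 0"] h by auto
  show ?thesis
  proof (intro exI ballI)
    fix x assume "x \<in> V"
    then show "laplacian V E f x = h x" using fun_cong[OF f, of x] by (simp add: L_def)
  qed
qed

lemma superharm_setD:
  assumes "f \<in> superharm_set V E s" and "x \<in> V"
  shows "0 \<le> f x" and "s x + laplacian V E f x \<le> 1"
  using assms by (auto simp: superharm_set_def)

lemma odometer_nonneg:
  assumes "stabilizes V E s" and "x \<in> V"
  shows "0 \<le> odometer V E s x"
  using assms unfolding odometer_def stabilizes_def
  by (auto intro!: cInf_greatest dest: superharm_setD)

lemma odometer_le:
  assumes "f \<in> superharm_set V E s" and "x \<in> V"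
  shows "odometer V E s x \<le> f x"
  unfolding odometer_def using assms
  by (intro cInf_lower) (auto intro!: bdd_belowI[of _ 0] dest: superharm_setD)

lemma odometer_approx:
  assumes "stabilizes V E s" and "0 < e"
  obtains f where "f \<in> superharm_set V E s" and "f x < odometer V E s x + e"
proof -
  have "Inf {f x |f. f \<in> superharm_set V E s} < odometer V E s x + e"
    using \<open>0 < e\<close> by (simp add: odometer_def)
  with assms(1) show ?thesis
    using cInf_lessD[of "{f x |f. f \<in> superharm_set V E s}"] that
    by (auto simp: stabilizes_def)
qed

lemma odometer_in_superharm_set:
  assumes "finite V" and "stabilizes V E s"
  shows "odometer V E s \<in> superharm_set V E s"
proof -
  let ?u = "odometer V E s"
  have "s x + laplacian V E ?u x \<le> 1" if x: "x \<in> V" for x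
  proof (rule field_le_epsilon)
    fix e :: real assume "0 < e"
    define d where "d = real (card {y\<in>V. E x y})"
    have "0 < e / (d + 1)" using \<open>0 < e\<close> by (simp add: d_def)
    then obtain f where f: "f \<in> superharm_set V E s" "f x < ?u x + e / (d + 1)"
      using odometer_approx[OF assms(2)] by blast
    have "laplacian V E ?u x \<le> laplacian V E f x + d * (f x - ?u x)"
      unfolding d_def using assms(1) odometer_le[OF f(1)] by (intro laplacian_le_of_le) auto
    also have "d * (f x - ?u x) \<le> d * (e / (d + 1))"
      using f(2) by (intro mult_left_mono) (auto simp: d_def)
    also have "d * (e / (d + 1)) \<le> e"
      using \<open>0 < e\<close> by (simp add: d_def field_simps)
    finally show "s x + laplacian V E ?u x \<le> 1 + e"
      using superharm_setD(2)[OF f(1) x] by simp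
  qed
  then show ?thesis
    using odometer_nonneg[OF assms(2)] by (auto simp: superharm_set_def)
qed

lemma Min_odometer_eq_0:
  assumes "finite V" and "V \<noteq> {}" and "stabilizes V E s"
  shows "Min (odometer V E s ` V) = 0"
proof -
  let ?u = "odometer V E s" and ?m = "Min (odometer V E s ` V)"
  have u: "?u \<in> superharm_set V E s" using odometer_in_superharm_set[OF assms(1,3)] .
  have "?m \<in> ?u ` V" using assms(1,2) by (intro Min_in) auto
  then obtain x where x: "x \<in> V" "?u x = ?m" by (metis imageE)
  have shifted: "(\<lambda>y. ?u y - ?m) \<in> superharm_set V E s"
    unfolding superharm_set_def
  proof (intro CollectI conjI ballI)
    fix y assume y: "y \<in> V"
    show "0 \<le> ?u y - ?m" using assms(1) y by simp
    show "s y + laplacian V E (\<lambda>y. ?u y - ?m) y \<le> 1"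
      unfolding laplacian_diff_const using superharm_setD(2)[OF u y] .
  qed
  have "?u x \<le> ?u x - ?m" using odometer_le[OF shifted x(1)] by simp
  moreover have "0 \<le> ?u x" using odometer_nonneg[OF assms(3) x(1)] .
  ultimately show ?thesis using x(2) by linarith
qed

lemma superharm_eq_one_if_sum_eq_card:
  assumes g: "finite_graph V E" and s: "(\<Sum>x\<in>V. s x) = real (card V)"
    and f: "f \<in> superharm_set V E s"
  shows "\<forall>x\<in>V. s x + laplacian V E f x = 1"
proof -
  let ?defect = "\<lambda>x. 1 - (s x + laplacian V E f x)"
  have fin: "finite V" using g by (simp add: finite_graph_def)
  have "(\<Sum>x\<in>V. ?defect x) = real (card V) - (\<Sum>x\<in>V. s x) - (\<Sum>x\<in>V. laplacian V E f x)"
    by (simp add: sum_subtractf sum.distrib)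
  also have "\<dots> = 0" using s sum_laplacian_eq_0[OF g] by simp
  finally have "(\<Sum>x\<in>V. ?defect x) = 0" .
  moreover have "(\<Sum>x\<in>V. ?defect x) = 0 \<longleftrightarrow> (\<forall>x\<in>V. ?defect x = 0)"
    by (rule sum_nonneg_eq_0_iff[OF fin]) (simp add: superharm_setD(2)[OF f])
  ultimately have "\<forall>x\<in>V. ?defect x = 0" by simp
  then show ?thesis by simp
qed

lemma stabilizes_if_sum_eq_card:
  assumes g: "finite_graph V E" and conn: "connected_graph V E"
    and s: "(\<Sum>x\<in>V. s x) = real (card V)"
  shows "stabilizes V E s"
proof -
  have fin: "finite V" using g by (simp add: finite_graph_def)
  have "(\<Sum>x\<in>V. 1 - s x) = 0" using s by (simp add: sum_subtractf)
  from laplacian_solvable[OF g conn this]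
  obtain f where f: "\<forall>x\<in>V. laplacian V E f x = 1 - s x" ..
  have "(\<lambda>x. f x - Min (f ` V)) \<in> superharm_set V E s"
    using f fin by (auto simp: superharm_set_def laplacian_diff_const)
  then show ?thesis by (auto simp: stabilizes_def)
qed

lemma solutions_eq_if_Min_eq:
  assumes g: "finite_graph V E" and conn: "connected_graph V E"
    and u: "\<forall>y\<in>V. s y + laplacian V E u y = 1" and v: "\<forall>y\<in>V. s y + laplacian V E v y = 1"
    and min: "Min (u ` V) = Min (v ` V)" and x: "x \<in> V"
  shows "u x = v x"
proof -
  have fin: "finite V" using g by (simp add: finite_graph_def)
  define c where "c = u x - v x"
  have "laplacian V E (\<lambda>y. u y - v y) y = 0" if "y \<in> V" for y
  proof -
    have "s y + laplacian V E u y = 1" "s y + laplacian V E v y = 1" using u v that by auto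
    then show ?thesis by (simp add: laplacian_diff)
  qed
  then have "u y = v y + c" if "y \<in> V" for y
    using harmonic_imp_constant[OF g conn _ that x, where f = "\<lambda>y. u y - v y"] by (simp add: c_def)
  then have "Min (u ` V) = Min ((\<lambda>y. v y + c) ` V)" by (intro arg_cong[where f = Min]) simp
  also have "\<dots> = Min (v ` V) + c" using Min_add_commute[OF fin] x by blast
  finally show ?thesis using min by (simp add: c_def)
qed

theorem lemma7p1:
  fixes V :: "'a set" and E :: "'a \<Rightarrow> 'a \<Rightarrow> bool" and s :: "'a \<Rightarrow> real"
  assumes "finite_graph V E" and "connected_graph V E"
    and "(\<Sum>x\<in>V. s x) = real (card V)"
  shows "stabilizes_to_one V E s
    \<and> (\<forall>x\<in>V. s x + laplacian V E (odometer V E s) x = 1)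
    \<and> Min (odometer V E s ` V) = 0
    \<and> (\<forall>u. (\<forall>x\<in>V. s x + laplacian V E u x = 1) \<and> Min (u ` V) = 0
           \<longrightarrow> (\<forall>x\<in>V. u x = odometer V E s x))"
proof -
  have fin: "finite V" and ne: "V \<noteq> {}"
    using assms(1,2) by (auto simp: finite_graph_def connected_graph_def)
  have stab: "stabilizes V E s" using stabilizes_if_sum_eq_card[OF assms] .
  have solves: "\<forall>x\<in>V. s x + laplacian V E (odometer V E s) x = 1"
    using superharm_eq_one_if_sum_eq_card[OF assms(1,3) odometer_in_superharm_set[OF fin stab]] .
  have min: "Min (odometer V E s ` V) = 0" using Min_odometer_eq_0[OF fin ne stab] .
  have "\<forall>x\<in>V. u x = odometer V E s x"
    if "\<forall>x\<in>V. s x + laplacian V E u x = 1" and "Min (u ` V) = 0" for u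
    using solutions_eq_if_Min_eq[OF assms(1,2) that(1) solves] that(2) min by simp
  with stab solves min show ?thesis unfolding stabilizes_to_one_def by blast
qed

end
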